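(* Consider the perturbed Collins First Form $$\dot x=-y+x^2y+\varepsilon\sum_{0\le i+j\le3}a_{i,j}x^iy^j,\qquad \dot y=x+xy^2+\varepsilon\sum_{0\le i+j\le3}b_{i,j}x^iy^j,$$ with real coefficients. Then the unperturbed equation is $dr/d\theta=r^3\cos\theta\sin\theta$, whose solution with $r(0)=z$ is $r(\theta,z)=z/\sqrt{1-z^2\sin^2\theta}$, which is $2\pi$-periodic and positive exactly for $z\in D=(0,1)$, and the first order averaged function $f_1$ satisfies, for $z\in(0,1)$ and $s=\sqrt{1-z^2}\in(0,1)$, $$z\,f_1(z)=\pi(1-s)\Big((b_{0,1}-b_{0,3}-b_{2,1})s^3+(b_{0,1}-2a_{3,0}-b_{0,3}+b_{2,1})s^2+(a_{1,0}-a_{1,2}+a_{3,0}+2b_{0,3})s+a_{1,0}+a_{1,2}+a_{3,0}\Big).$$ In particular, $f_1$ has at most $3$ simple zeros in $(0,1)$, and there are coefficient choices for which it has exactly $3$; hence first order averaging yields at most three limit cycles of this system, and three is reached.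
   Context: Averaging framework (first order): in polar coordinates $x=r\cos\theta,y=r\sin\theta$, write $dr/d\theta=F_0(\theta,r)+\varepsilon F_1(\theta,r)+O(\varepsilon^2)$; let $r(\theta,z)$ solve $dr/d\theta=F_0$ with $r(0,z)=z$ and $Y(\theta,z)$ solve $Y'=\partial_rF_0(\theta,r(\theta,z))Y$, $Y(0,z)=1$. The first order averaged function is $f_1(z)=Y(2\pi,z)\int_0^{2\pi}Y(s,z)^{-1}F_1(s,r(s,z))\,ds$. Each simple zero of $f_1$ in $D$ gives, for $|\varepsilon|$ small, a limit cycle bifurcating from a periodic orbit of the unperturbed center. *)

theory Defs
  imports "HOL-Analysis.Analysis"
begin

definition pert :: "(nat \<Rightarrow> nat \<Rightarrow> real) \<Rightarrow> real \<Rightarrow> real \<Rightarrow> real" where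
  "pert c x y = (\<Sum>i\<le>3. \<Sum>j\<le>3 - i. c i j * x ^ i * y ^ j)"

definition collinsP :: "(nat \<Rightarrow> nat \<Rightarrow> real) \<Rightarrow> real \<Rightarrow> real \<Rightarrow> real \<Rightarrow> real" where
  "collinsP a eps x y = - y + x ^ 2 * y + eps * pert a x y"

definition collinsQ :: "(nat \<Rightarrow> nat \<Rightarrow> real) \<Rightarrow> real \<Rightarrow> real \<Rightarrow> real \<Rightarrow> real" where
  "collinsQ b eps x y = x + x * y ^ 2 + eps * pert b x y"

text \<open>dr/dtheta = rdot / thetadot for the planar field (P,Q) in polar coordinates
  x = r cos theta, y = r sin theta.\<close>
definition polar_drdtheta ::
  "(real \<Rightarrow> real \<Rightarrow> real) \<Rightarrow> (real \<Rightarrow> real \<Rightarrow> real) \<Rightarrow> real \<Rightarrow> real \<Rightarrow> real" where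
  "polar_drdtheta P Q \<theta> r =
     (let x = r * cos \<theta>; y = r * sin \<theta> in
      (cos \<theta> * P x y + sin \<theta> * Q x y) / ((cos \<theta> * Q x y - sin \<theta> * P x y) / r))"

definition collinsF0 :: "real \<Rightarrow> real \<Rightarrow> real" where
  "collinsF0 \<theta> r = polar_drdtheta (collinsP (\<lambda>_ _. 0) 0) (collinsQ (\<lambda>_ _. 0) 0) \<theta> r"

definition collinsF1 :: "(nat \<Rightarrow> nat \<Rightarrow> real) \<Rightarrow> (nat \<Rightarrow> nat \<Rightarrow> real) \<Rightarrow> real \<Rightarrow> real \<Rightarrow> real" where
  "collinsF1 a b \<theta> r = deriv (\<lambda>eps. polar_drdtheta (collinsP a eps) (collinsQ b eps) \<theta> r) 0"

definition rsol :: "real \<Rightarrow> real \<Rightarrow> real" where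
  "rsol \<theta> z = z / sqrt (1 - z ^ 2 * (sin \<theta>) ^ 2)"

text \<open>Y(theta,z): the solution of Y' = d_r F0(theta, r(theta,z)) Y, Y(0,z) = 1
  (scalar linear ODE, written via its explicit solution).\<close>
definition avgY :: "(real \<Rightarrow> real \<Rightarrow> real) \<Rightarrow> (real \<Rightarrow> real \<Rightarrow> real) \<Rightarrow> real \<Rightarrow> real \<Rightarrow> real" where
  "avgY F0 r \<theta> z = exp (integral {0..\<theta>} (\<lambda>s. deriv (F0 s) (r s z)))"

definition averaged_f1 ::
  "(real \<Rightarrow> real \<Rightarrow> real) \<Rightarrow> (real \<Rightarrow> real \<Rightarrow> real) \<Rightarrow> (real \<Rightarrow> real \<Rightarrow> real) \<Rightarrow> real \<Rightarrow> real" where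
  "averaged_f1 F0 F1 r z =
     avgY F0 r (2 * pi) z * integral {0..2 * pi} (\<lambda>s. F1 s (r s z) / avgY F0 r s z)"

definition collins_f1 :: "(nat \<Rightarrow> nat \<Rightarrow> real) \<Rightarrow> (nat \<Rightarrow> nat \<Rightarrow> real) \<Rightarrow> real \<Rightarrow> real" where
  "collins_f1 a b = averaged_f1 collinsF0 (collinsF1 a b) rsol"

definition simple_zeros :: "(real \<Rightarrow> real) \<Rightarrow> real set \<Rightarrow> real set" where
  "simple_zeros f S = {z \<in> S. f z = 0 \<and> f differentiable (at z) \<and> deriv f z \<noteq> 0}"

end

theory Submission
  imports Defs "HOL-Computational_Algebra.Polynomial"
begin

text \<open>
  Along the unperturbed orbit r(\<theta>, z) = z / q with q = sqrt (1 - z^2 sin^2 \<theta>) the variational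
  equation is solved by Y = q^(-3), so the integrand of f1 is q times a polynomial in cos \<theta>,
  sin \<theta> and z / q. Averaging it over the symmetries \<theta> \<mapsto> 2\<pi> - \<theta>, \<pi> - \<theta>, \<theta> - \<pi> of the period
  kills every term odd in cos \<theta> or sin \<theta>; what survives is a combination of 1, sin^2 \<theta> and
  1 / q^2, whose integrals over a period are 2\<pi>, \<pi> and 2\<pi> / sqrt (1 - z^2). In the variable
  s = sqrt (1 - z^2), an involution of (0, 1), this makes z f1(z) equal to \<pi> (1 - s) P(s) for a
  cubic P, and simple zeros of f1 correspond to simple roots of P in (0, 1). The choice
  P(s) = (4s - 1)(2s - 1)(4s - 3) realises three of them.
\<close>

section \<open>Integrals over a period\<close>

lemma has_integral_from_real_derivative:
  fixes F f :: "real \<Rightarrow> real"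
  assumes "a \<le> b" and "\<And>x. (F has_real_derivative f x) (at x)"
  shows "(f has_integral F b - F a) {a..b}"
  using assms by (intro fundamental_theorem_of_calculus)
    (auto simp: has_real_derivative_iff_has_vector_derivative intro: has_vector_derivative_at_within)

lemma integral_reflect_ivl:
  fixes f :: "real \<Rightarrow> 'a::banach"
  shows "integral {0..T} (\<lambda>x. f (c - x)) = integral {c - T..c} f"
proof -
  have "integral {0..T} (\<lambda>x. f (c - x)) = integral {-c..T - c} (\<lambda>y. f (- y))"
    using integral_shift_real_ivl[where a="-c" and b="T - c" and c="-c" and f="\<lambda>y. f (- y)"] by simp
  also have "\<dots> = integral {c - T..c} f"
    using Henstock_Kurzweil_Integration.integral_reflect_real[where a="c - T" and b=c and f=f] by simp
  finally show ?thesis .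
qed

lemma integral_periodic_translate:
  fixes f :: "real \<Rightarrow> 'a::banach"
  assumes int: "\<And>a b. f integrable_on {a..b}" and per: "\<And>x. f (x + T) = f x"
    and "0 \<le> c" "c \<le> T"
  shows "integral {c - T..c} f = integral {0..T} f"
proof -
  have "integral {c - T..c} f = integral {c - T..0} f + integral {0..c} f"
    using Henstock_Kurzweil_Integration.integral_combine[of "c - T" 0 c f] int assms by simp
  also have "integral {c - T..0} f = integral {c..T} f"
    using integral_shift_real_ivl[where a=c and b=T and c=T and f=f] per by simp
  also have "integral {c..T} f + integral {0..c} f = integral {0..T} f"
    using Henstock_Kurzweil_Integration.integral_combine[of 0 c T f] int assms by (simp add: add.commute)
  finally show ?thesis .
qed

lemma integral_periodic_reflect:
  fixes f :: "real \<Rightarrow> 'a::banach"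
  assumes "continuous_on UNIV f" and "\<And>x. f (x + T) = f x" and "0 \<le> c" "c \<le> T"
  shows "integral {0..T} (\<lambda>x. f (c - x)) = integral {0..T} f"
  using assms integral_periodic_translate[of f T c]
  by (simp add: integral_reflect_ivl integrable_continuous_interval continuous_on_subset)

lemma integral_periodic_symmetrize:
  fixes f :: "real \<Rightarrow> real"
  assumes cont: "continuous_on UNIV f" and per: "\<And>x. f (x + T) = f x" and "0 \<le> T"
  shows "integral {0..T} (\<lambda>x. f x + f (T - x) + f (T/2 - x) + f (x - T/2)) = 4 * integral {0..T} f"
proof -
  define g where "g y = f (T/2 - y)" for y
  have cont_g: "continuous_on UNIV g"
    unfolding g_def by (rule continuous_on_compose2[OF cont]) (auto intro: continuous_intros)
  have per_g: "g (x + T) = g x" for x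
    unfolding g_def using per[of "T/2 - (x + T)"] by simp
  have int: "h integrable_on {0..T}" if "continuous_on UNIV h" for h :: "real \<Rightarrow> real"
    using that by (intro integrable_continuous_interval) (auto intro: continuous_on_subset)
  have cont_refl: "continuous_on UNIV (\<lambda>x. h (c - x))" if "continuous_on UNIV h" for h :: "real \<Rightarrow> real" and c
    by (rule continuous_on_compose2[OF that]) (auto intro: continuous_intros)
  have "(\<lambda>x. f x + f (T - x) + f (T/2 - x) + f (x - T/2)) = (\<lambda>x. f x + f (T - x) + g x + g (T - x))"
    by (simp add: g_def algebra_simps)
  moreover have "integral {0..T} g = integral {0..T} f"
    unfolding g_def using integral_periodic_reflect[OF cont per, of "T/2"] assms by simp
  moreover have "integral {0..T} (\<lambda>x. g (T - x)) = integral {0..T} g"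
    using integral_periodic_reflect[OF cont_g per_g, of T] assms by simp
  moreover have "integral {0..T} (\<lambda>x. f (T - x)) = integral {0..T} f"
    using integral_periodic_reflect[OF cont per, of T] assms by simp
  ultimately show ?thesis
    using int[OF cont] int[OF cont_g] int[OF cont_refl[OF cont]] int[OF cont_refl[OF cont_g]]
    by (simp add: integral_add integrable_add)
qed

section \<open>The unperturbed system\<close>

lemma collinsF0_eq: "collinsF0 \<theta> r = r ^ 3 * cos \<theta> * sin \<theta>"
proof (cases "r = 0")
  case True
  then show ?thesis by (simp add: collinsF0_def polar_drdtheta_def collinsP_def collinsQ_def)
next
  case False
  have cs: "sin \<theta> ^ 2 + cos \<theta> ^ 2 = 1" by simp
  have den: "cos \<theta> * (r * cos \<theta> + r * cos \<theta> * (r * sin \<theta>)\<^sup>2) -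
      sin \<theta> * (- (r * sin \<theta>) + (r * cos \<theta>)\<^sup>2 * (r * sin \<theta>)) = r"
    using cs by algebra
  have num: "cos \<theta> * (- (r * sin \<theta>) + (r * cos \<theta>)\<^sup>2 * (r * sin \<theta>)) +
      sin \<theta> * (r * cos \<theta> + r * cos \<theta> * (r * sin \<theta>)\<^sup>2) = r ^ 3 * cos \<theta> * sin \<theta>"
    using cs by algebra
  show ?thesis
    unfolding collinsF0_def polar_drdtheta_def collinsP_def collinsQ_def Let_def
    using False by (simp only: den num mult_zero_left add_0_right) simp
qed

lemma collinsF1_eq:
  assumes "r \<noteq> 0"
  shows "collinsF1 a b \<theta> r =
    (1 + r^2 * (sin \<theta>)^2) * cos \<theta> * pert a (r * cos \<theta>) (r * sin \<theta>)
    + (1 - r^2 * (cos \<theta>)^2) * sin \<theta> * pert b (r * cos \<theta>) (r * sin \<theta>)"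
proof -
  define c s where "c = cos \<theta>" and "s = sin \<theta>"
  define A B where "A = pert a (r * c) (r * s)" and "B = pert b (r * c) (r * s)"
  have cs: "s^2 + c^2 = 1" unfolding s_def c_def by simp
  have num: "c * (- (r * s) + (r * c)\<^sup>2 * (r * s) + e * A) + s * (r * c + r * c * (r * s)\<^sup>2 + e * B)
      = r^3 * c * s + e * (c * A + s * B)" for e
    using cs by algebra
  have den: "c * (r * c + r * c * (r * s)\<^sup>2 + e * B) - s * (- (r * s) + (r * c)\<^sup>2 * (r * s) + e * A)
      = r + e * (c * B - s * A)" for e
    using cs by algebra
  have "(\<lambda>e. polar_drdtheta (collinsP a e) (collinsQ b e) \<theta> r)
      = (\<lambda>e. (r^3 * c * s + e * (c * A + s * B)) / ((r + e * (c * B - s * A)) / r))"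
    unfolding polar_drdtheta_def collinsP_def collinsQ_def Let_def
    unfolding c_def[symmetric] s_def[symmetric] A_def[symmetric] B_def[symmetric] num den ..
  moreover have "((\<lambda>e. (r^3 * c * s + e * (c * A + s * B)) / ((r + e * (c * B - s * A)) / r))
      has_real_derivative (c * A + s * B) - r^2 * c * s * (c * B - s * A)) (at 0)"
    using assms by (auto intro!: derivative_eq_intros simp: field_simps power2_eq_square power3_eq_cube)
  ultimately have "collinsF1 a b \<theta> r = (c * A + s * B) - r^2 * c * s * (c * B - s * A)"
    unfolding collinsF1_def by (simp add: DERIV_imp_deriv)
  also have "\<dots> = (1 + r^2 * s^2) * c * A + (1 - r^2 * c^2) * s * B"
    by (simp add: algebra_simps power2_eq_square)
  finally show ?thesis unfolding c_def s_def A_def B_def .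
qed

lemma one_minus_sq_mult_sq_pos:
  fixes z s :: real
  assumes "\<bar>z\<bar> < 1" and "\<bar>s\<bar> \<le> 1"
  shows "0 < 1 - z^2 * s^2"
proof -
  have "z^2 < 1" using assms(1) by (simp add: abs_square_less_1)
  moreover have "s^2 \<le> 1" using assms(2) by (simp add: abs_square_le_1)
  then have "z^2 * s^2 \<le> z^2"
    using mult_left_mono[of "s^2" 1 "z^2"] by simp
  ultimately show ?thesis by linarith
qed

lemma rsol_has_real_derivative:
  assumes "\<bar>z\<bar> < 1"
  shows "((\<lambda>t. rsol t z) has_real_derivative collinsF0 \<theta> (rsol \<theta> z)) (at \<theta>)"
proof -
  define w where "w = 1 - z^2 * (sin \<theta>)^2"
  have "0 < w" using one_minus_sq_mult_sq_pos[OF assms abs_sin_le_one] w_def by simp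
  then have w: "0 < w" "sqrt w ^ 2 = w" by simp_all
  show ?thesis
    unfolding rsol_def collinsF0_eq using w
    by (auto intro!: derivative_eq_intros simp flip: w_def)
       (simp add: field_simps power3_eq_cube power2_eq_square)
qed

lemma deriv_collinsF0: "deriv (collinsF0 \<theta>) r = 3 * r^2 * cos \<theta> * sin \<theta>"
proof -
  have "((\<lambda>r. r ^ 3 * cos \<theta> * sin \<theta>) has_real_derivative 3 * r^2 * cos \<theta> * sin \<theta>) (at r)"
    by (auto intro!: derivative_eq_intros)
  then show ?thesis by (simp add: collinsF0_eq[abs_def] DERIV_imp_deriv)
qed

section \<open>The first order averaged function\<close>

lemma avgY_collins:
  assumes z: "\<bar>z\<bar> < 1" and "0 \<le> \<theta>"
  shows "avgY collinsF0 rsol \<theta> z = inverse (sqrt (1 - z^2 * (sin \<theta>)^2) ^ 3)"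
proof -
  define w where "w t = 1 - z^2 * (sin t)^2" for t
  have w_pos: "0 < w t" for t
    unfolding w_def by (rule one_minus_sq_mult_sq_pos[OF z abs_sin_le_one])
  have "((\<lambda>s. deriv (collinsF0 s) (rsol s z)) has_integral
      (-(3/2) * ln (w \<theta>) - (-(3/2) * ln (w 0)))) {0..\<theta>}"
  proof (rule has_integral_from_real_derivative[OF \<open>0 \<le> \<theta>\<close>])
    fix t
    have r2: "(rsol t z)^2 = z^2 / w t"
      unfolding rsol_def w_def using w_pos[of t] by (simp add: power_divide w_def)
    show "((\<lambda>t. -(3/2) * ln (w t)) has_real_derivative deriv (collinsF0 t) (rsol t z)) (at t)"
      unfolding deriv_collinsF0 r2 w_def using w_pos[of t, unfolded w_def]
      by (auto intro!: derivative_eq_intros simp: field_simps)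
  qed
  then have "avgY collinsF0 rsol \<theta> z = exp (- (3 * ln (sqrt (w \<theta>))))"
    unfolding avgY_def using w_pos[of \<theta>] by (simp add: integral_unique w_def ln_sqrt)
  also have "\<dots> = inverse (exp (ln (sqrt (w \<theta>))) ^ 3)"
    by (simp add: exp_minus exp_of_nat_mult[of 3, simplified])
  finally show ?thesis using w_pos[of \<theta>] by (simp add: w_def)
qed

lemma has_integral_sin_squared: "((\<lambda>x. (sin x)^2) has_integral pi) {0..2*pi}"
proof -
  have "((\<lambda>x. (sin x)^2) has_integral (\<lambda>x. x/2 - sin x * cos x / 2) (2*pi) - (\<lambda>x. x/2 - sin x * cos x / 2) 0) {0..2*pi}"
  proof (rule has_integral_from_real_derivative)
    fix x
    show "((\<lambda>x. x/2 - sin x * cos x / 2) has_real_derivative (sin x)^2) (at x)"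
      by (auto intro!: derivative_eq_intros) (simp add: power2_eq_square[symmetric] cos_squared_eq field_simps)
  qed simp
  then show ?thesis by simp
qed

text \<open>The function differentiated here is the branch of arctan (S tan x) that is continuous on
  the whole line.\<close>
lemma has_real_derivative_arctan_tan_branch:
  fixes S x :: real
  assumes S: "0 < S"
  shows "((\<lambda>x. x - arctan ((1 - S) * sin x * cos x / ((cos x)^2 + S * (sin x)^2)))
    has_real_derivative S / ((cos x)^2 + S^2 * (sin x)^2)) (at x)"
proof -
  define w where "w x = (cos x)^2 + S^2 * (sin x)^2" for x
  define N where "N x = (1 - S) * sin x * cos x" for x
  define D where "D x = (cos x)^2 + S * (sin x)^2" for x
  have D_pos: "0 < D x"
  proof (cases "cos x = 0")
    case True
    then show ?thesis using S sin_squared_eq[of x] by (simp add: D_def)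
  next
    case False
    then show ?thesis using S by (simp add: D_def add_pos_nonneg)
  qed
  have cs: "(cos x)^2 + (sin x)^2 = 1" by simp
  have N': "(N has_real_derivative (1 - S) * ((cos x)^2 - (sin x)^2)) (at x)"
    unfolding N_def by (auto intro!: derivative_eq_intros simp: power2_eq_square algebra_simps)
  have D': "(D has_real_derivative 2 * (S - 1) * sin x * cos x) (at x)"
    unfolding D_def by (auto intro!: derivative_eq_intros simp: algebra_simps)
  have norm: "D x ^ 2 + N x ^ 2 = w x"
    unfolding D_def N_def w_def using cs by algebra
  have cross: "(1 - S) * ((cos x)^2 - (sin x)^2) * D x - N x * (2 * (S - 1) * sin x * cos x) = w x - S"
    unfolding D_def N_def w_def using cs by algebra
  have "((\<lambda>x. N x / D x) has_real_derivative (w x - S) / (D x * D x)) (at x)"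
    using DERIV_divide[OF N' D'] D_pos by (simp only: cross)
  moreover have "1 + (N x / D x)^2 = w x / (D x * D x)"
    using D_pos norm by (simp add: field_simps power2_eq_square)
  ultimately have A': "((\<lambda>x. arctan (N x / D x)) has_real_derivative (w x - S) / w x) (at x)"
    using DERIV_chain2[OF DERIV_arctan] D_pos by fastforce
  have "0 < w x"
    using D_pos norm by (metis add_pos_nonneg zero_le_power2 zero_less_power2 less_irrefl)
  then have "((\<lambda>x. x - arctan (N x / D x)) has_real_derivative S / w x) (at x)"
    using DERIV_diff[OF DERIV_ident A'] by (simp add: field_simps)
  then show ?thesis unfolding N_def D_def w_def .
qed

lemma has_integral_inverse_one_minus_sq_mult_sin_sq:
  fixes z :: real
  assumes z: "\<bar>z\<bar> < 1"
  shows "((\<lambda>x. 1 / (1 - z^2 * (sin x)^2)) has_integral 2 * pi / sqrt (1 - z^2)) {0..2*pi}"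
proof -
  define S where "S = sqrt (1 - z^2)"
  have "z^2 < 1" using z by (simp add: abs_square_less_1)
  then have S: "0 < S" "S^2 = 1 - z^2" unfolding S_def by simp_all
  define H where "H x = (x - arctan ((1 - S) * sin x * cos x / ((cos x)^2 + S * (sin x)^2))) / S" for x
  have "((\<lambda>x. 1 / (1 - z^2 * (sin x)^2)) has_integral H (2*pi) - H 0) {0..2*pi}"
  proof (rule has_integral_from_real_derivative)
    fix x :: real
    have "(cos x)^2 + S^2 * (sin x)^2 = 1 - z^2 * (sin x)^2"
      unfolding S(2) using sin_cos_squared_add2[of x] by algebra
    then show "(H has_real_derivative 1 / (1 - z^2 * (sin x)^2)) (at x)"
      unfolding H_def using DERIV_cdivide[OF has_real_derivative_arctan_tan_branch[OF S(1), of x], of S] S(1)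
      by simp
  qed simp
  moreover have "H (2*pi) - H 0 = 2 * pi / S" unfolding H_def by simp
  ultimately show ?thesis unfolding S_def by simp
qed

lemma pert_eq_monomials:
  "pert c x y = c 0 0 + c 0 1 * y + c 0 2 * y^2 + c 0 3 * y^3
     + c 1 0 * x + c 1 1 * x * y + c 1 2 * x * y^2
     + c 2 0 * x^2 + c 2 1 * x^2 * y + c 3 0 * x^3"
  unfolding pert_def by (simp add: numeral_eq_Suc atMost_Suc algebra_simps)

text \<open>
  The integrand F1(\<theta>, r(\<theta>, z)) / Y(\<theta>, z) of f1 as a function of c = cos \<theta> and s = sin \<theta>;
  here q = z / r(\<theta>, z) and Y(\<theta>, z) = q^(-3).
\<close>
definition collins_integrand ::
  "(nat \<Rightarrow> nat \<Rightarrow> real) \<Rightarrow> (nat \<Rightarrow> nat \<Rightarrow> real) \<Rightarrow> real \<Rightarrow> real \<Rightarrow> real \<Rightarrow> real" where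
  "collins_integrand a b z c s =
     (let q = sqrt (1 - z^2 * s^2); x = z / q * c; y = z / q * s
      in q * (c * pert a x y + (1 - z^2) * s * pert b x y))"

lemma collinsF1_rsol_div_avgY:
  assumes z: "\<bar>z\<bar> < 1" "z \<noteq> 0" and "0 \<le> \<theta>"
  shows "collinsF1 a b \<theta> (rsol \<theta> z) / avgY collinsF0 rsol \<theta> z
    = collins_integrand a b z (cos \<theta>) (sin \<theta>)"
proof -
  define q where "q = sqrt (1 - z^2 * (sin \<theta>)^2)"
  have "0 < 1 - z^2 * (sin \<theta>)^2" by (rule one_minus_sq_mult_sq_pos[OF z(1) abs_sin_le_one])
  then have q: "0 < q" "q^2 = 1 - z^2 * (sin \<theta>)^2" unfolding q_def by simp_all
  have "collinsF1 a b \<theta> (rsol \<theta> z) / avgY collinsF0 rsol \<theta> z = collinsF1 a b \<theta> (z / q) * q^3"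
    using avgY_collins[OF z(1) \<open>0 \<le> \<theta>\<close>] by (simp add: rsol_def q_def divide_inverse)
  also have "\<dots> = ((1 + (z/q)^2 * (sin \<theta>)^2) * q^3) * cos \<theta> * pert a (z/q * cos \<theta>) (z/q * sin \<theta>)
     + ((1 - (z/q)^2 * (cos \<theta>)^2) * q^3) * sin \<theta> * pert b (z/q * cos \<theta>) (z/q * sin \<theta>)"
    using z q by (subst collinsF1_eq) (auto simp: algebra_simps)
  also have "(1 + (z/q)^2 * (sin \<theta>)^2) * q^3 = q"
    using q by (simp add: field_simps power2_eq_square power3_eq_cube)
  also have "(1 - (z/q)^2 * (cos \<theta>)^2) * q^3 = q * (1 - z^2)"
  proof -
    have "(1 - (z/q)^2 * (cos \<theta>)^2) * q^3 = q * (q^2 - z^2 * (cos \<theta>)^2)"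
      using q by (simp add: field_simps power2_eq_square power3_eq_cube)
    also have "q^2 - z^2 * (cos \<theta>)^2 = 1 - z^2"
      unfolding q(2) using sin_cos_squared_add[of \<theta>] by algebra
    finally show ?thesis .
  qed
  finally show ?thesis
    unfolding collins_integrand_def Let_def q_def[symmetric] by (simp add: algebra_simps)
qed

lemma collins_integrand_symmetrized:
  fixes a b :: "nat \<Rightarrow> nat \<Rightarrow> real" and z c s :: real
  defines "\<alpha> \<equiv> a 3 0 - a 1 2 + (1 - z^2) * (b 0 3 - b 2 1)"
    and "\<beta> \<equiv> a 1 2 - 2 * a 3 0 + (1 - z^2) * b 2 1"
  assumes z: "\<bar>z\<bar> < 1" "z \<noteq> 0" and cs: "c^2 + s^2 = 1"
  shows "collins_integrand a b z c s + collins_integrand a b z c (-s)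
      + collins_integrand a b z (-c) s + collins_integrand a b z (-c) (-s)
    = 4 * ((a 1 0 * z - \<alpha> / z - \<beta> * z)
           + ((1 - z^2) * b 0 1 * z - a 1 0 * z - \<alpha> * z) * s^2
           + (\<alpha> / z + \<beta> * z + a 3 0 * z^3) / (1 - z^2 * s^2))"
proof -
  define q where "q = sqrt (1 - z^2 * s^2)"
  define r where "r = z / q"
  have "s^2 \<le> 1" using cs zero_le_power2[of c] by linarith
  then have "\<bar>s\<bar> \<le> 1" by (simp add: abs_square_le_1)
  then have "0 < 1 - z^2 * s^2" by (rule one_minus_sq_mult_sq_pos[OF z(1)])
  then have q: "0 < q" "q^2 = 1 - z^2 * s^2" unfolding q_def by simp_all
  \<comment> \<open>Only the monomials of \<open>pert\<close> that are even in both c and s survive.\<close>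
  have "collins_integrand a b z c s + collins_integrand a b z c (-s)
      + collins_integrand a b z (-c) s + collins_integrand a b z (-c) (-s)
    = 4 * q * (a 1 0 * r * c^2 + a 1 2 * r^3 * c^2 * s^2 + a 3 0 * r^3 * c^4
      + (1 - z^2) * (b 0 1 * r * s^2 + b 0 3 * r^3 * s^4 + b 2 1 * r^3 * c^2 * s^2))"
    unfolding collins_integrand_def Let_def power2_minus q_def[symmetric] r_def[symmetric] pert_eq_monomials
    by algebra
  also have "\<dots> = 4 * ((a 1 0 * z - \<alpha> / z - \<beta> * z)
           + ((1 - z^2) * b 0 1 * z - a 1 0 * z - \<alpha> * z) * s^2
           + (\<alpha> / z + \<beta> * z + a 3 0 * z^3) / (1 - z^2 * s^2))"
  proof -
    have c2: "c^2 = 1 - s^2" using cs by simp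
    show ?thesis
      unfolding r_def \<alpha>_def \<beta>_def q(2)[symmetric] using q(1) z(2)
      by (simp add: field_simps) (use c2 q(2) in algebra)
  qed
  finally show ?thesis .
qed

definition collins_cubic :: "(nat \<Rightarrow> nat \<Rightarrow> real) \<Rightarrow> (nat \<Rightarrow> nat \<Rightarrow> real) \<Rightarrow> real poly" where
  "collins_cubic a b = [: a 1 0 + a 1 2 + a 3 0, a 1 0 - a 1 2 + a 3 0 + 2 * b 0 3,
      b 0 1 - 2 * a 3 0 - b 0 3 + b 2 1, b 0 1 - b 0 3 - b 2 1 :]"

lemma poly_collins_cubic:
  "poly (collins_cubic a b) s = (b 0 1 - b 0 3 - b 2 1) * s ^ 3
     + (b 0 1 - 2 * a 3 0 - b 0 3 + b 2 1) * s ^ 2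
     + (a 1 0 - a 1 2 + a 3 0 + 2 * b 0 3) * s
     + a 1 0 + a 1 2 + a 3 0"
  unfolding collins_cubic_def by (simp add: algebra_simps power2_eq_square power3_eq_cube)

lemma continuous_on_collins_integrand:
  assumes "\<bar>z\<bar> < 1"
  shows "continuous_on UNIV (\<lambda>\<theta>. collins_integrand a b z (cos \<theta>) (sin \<theta>))"
proof -
  have "sqrt (1 - z^2 * (sin \<theta>)^2) \<noteq> 0" for \<theta>
    using one_minus_sq_mult_sq_pos[OF assms abs_sin_le_one, of \<theta>] by simp
  then show ?thesis
    unfolding collins_integrand_def Let_def pert_eq_monomials by (intro continuous_intros) auto
qed

lemma collins_f1_eq_integral:
  assumes "\<bar>z\<bar> < 1" "z \<noteq> 0"
  shows "collins_f1 a b z = integral {0..2*pi} (\<lambda>\<theta>. collins_integrand a b z (cos \<theta>) (sin \<theta>))"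
proof -
  have "avgY collinsF0 rsol (2*pi) z = 1"
    using avgY_collins[OF assms(1), of "2*pi"] by simp
  moreover have "integral {0..2*pi} (\<lambda>\<theta>. collinsF1 a b \<theta> (rsol \<theta> z) / avgY collinsF0 rsol \<theta> z)
      = integral {0..2*pi} (\<lambda>\<theta>. collins_integrand a b z (cos \<theta>) (sin \<theta>))"
    using collinsF1_rsol_div_avgY[OF assms] by (intro integral_cong) auto
  ultimately show ?thesis
    unfolding collins_f1_def averaged_f1_def by simp
qed

lemma collins_f1_eq_period_averages:
  fixes a b :: "nat \<Rightarrow> nat \<Rightarrow> real" and z :: real
  defines "\<alpha> \<equiv> a 3 0 - a 1 2 + (1 - z^2) * (b 0 3 - b 2 1)"
    and "\<beta> \<equiv> a 1 2 - 2 * a 3 0 + (1 - z^2) * b 2 1"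
  assumes z: "\<bar>z\<bar> < 1" "z \<noteq> 0"
  shows "collins_f1 a b z = 2 * pi * (a 1 0 * z - \<alpha> / z - \<beta> * z)
    + pi * ((1 - z^2) * b 0 1 * z - a 1 0 * z - \<alpha> * z)
    + 2 * pi * (\<alpha> / z + \<beta> * z + a 3 0 * z^3) / sqrt (1 - z^2)"
proof -
  define G where "G \<theta> = collins_integrand a b z (cos \<theta>) (sin \<theta>)" for \<theta>
  define e0 e1 e2 where "e0 = a 1 0 * z - \<alpha> / z - \<beta> * z"
    and "e1 = (1 - z^2) * b 0 1 * z - a 1 0 * z - \<alpha> * z"
    and "e2 = \<alpha> / z + \<beta> * z + a 3 0 * z^3"
  have "G x + G (2*pi - x) + G (2*pi/2 - x) + G (x - 2*pi/2)
      = collins_integrand a b z (cos x) (sin x) + collins_integrand a b z (cos x) (- sin x)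
        + collins_integrand a b z (- cos x) (sin x) + collins_integrand a b z (- cos x) (- sin x)" for x
    by (simp add: G_def sin_diff cos_diff)
  also have "\<dots> x = 4 * (e0 + e1 * (sin x)^2 + e2 / (1 - z^2 * (sin x)^2))" for x
    unfolding e0_def e1_def e2_def \<alpha>_def \<beta>_def
    by (rule collins_integrand_symmetrized[OF z sin_cos_squared_add2])
  finally have symmetrized: "(\<lambda>x. G x + G (2*pi - x) + G (2*pi/2 - x) + G (x - 2*pi/2))
      = (\<lambda>x. 4 * (e0 + e1 * (sin x)^2 + e2 * (1 / (1 - z^2 * (sin x)^2))))"
    by simp
  have "((\<lambda>x. 4 * (e0 + e1 * (sin x)^2 + e2 * (1 / (1 - z^2 * (sin x)^2))))
      has_integral 4 * (e0 * (2*pi) + e1 * pi + e2 * (2 * pi / sqrt (1 - z^2)))) {0..2*pi}"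
    by (intro has_integral_cmul has_integral_add has_integral_mult_right has_integral_sin_squared
        has_integral_inverse_one_minus_sq_mult_sin_sq z)
      (use has_integral_const_real[of e0 0 "2*pi"] in \<open>simp add: mult.commute\<close>)
  moreover have "continuous_on UNIV G"
    unfolding G_def by (rule continuous_on_collins_integrand[OF z(1)])
  ultimately have "integral {0..2*pi} G = e0 * (2*pi) + e1 * pi + e2 * (2 * pi / sqrt (1 - z^2))"
    using integral_periodic_symmetrize[of G "2*pi"] symmetrized
    by (simp add: G_def integral_unique)
  moreover have "collins_f1 a b z = integral {0..2*pi} G"
    unfolding G_def[abs_def] by (rule collins_f1_eq_integral[OF z])
  ultimately show ?thesis
    unfolding e0_def e1_def e2_def by (simp add: algebra_simps add_divide_distrib)
qed

lemma collins_f1_closed_form: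
  assumes z: "0 < z" "z < 1"
  shows "z * collins_f1 a b z = pi * (1 - sqrt (1 - z^2)) * poly (collins_cubic a b) (sqrt (1 - z^2))"
proof -
  define S where "S = sqrt (1 - z^2)"
  have "z^2 < 1" using z by (simp add: power_less_one_iff)
  then have S: "0 < S" "S^2 = 1 - z^2" unfolding S_def by simp_all
  have "\<bar>z\<bar> < 1" "z \<noteq> 0" using z by auto
  note averages = collins_f1_eq_period_averages[OF this, of a b, folded S_def]
  show ?thesis
    unfolding averages poly_collins_cubic S_def[symmetric] using z S(1)
    by (simp add: field_simps) (use S(2) in algebra)
qed

section \<open>Simple zeros\<close>

lemma finite_simple_roots:
  fixes p :: "'a::idom poly"
  shows "finite {x. poly p x = 0 \<and> poly (pderiv p) x \<noteq> 0}"
proof (cases "p = 0")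
  case False
  then show ?thesis by (auto intro: finite_subset[OF _ poly_roots_finite[OF False]])
qed simp

lemma card_simple_roots_le_degree:
  fixes p :: "'a::idom poly"
  shows "card {x. poly p x = 0 \<and> poly (pderiv p) x \<noteq> 0} \<le> degree p"
proof (cases "p = 0")
  case False
  have "card {x. poly p x = 0 \<and> poly (pderiv p) x \<noteq> 0} \<le> card {x. poly p x = 0}"
    using False by (intro card_mono poly_roots_finite) auto
  also have "\<dots> \<le> degree p"
    using False by (rule card_poly_roots_bound)
  finally show ?thesis .
qed simp

lemma sqrt_one_minus_sq_mem_unit:
  fixes z :: real
  assumes "z \<in> {0<..<1}"
  shows "sqrt (1 - z^2) \<in> {0<..<1}"
  using assms by (simp add: power_less_one_iff)

lemma sqrt_one_minus_sq_involution:
  fixes z :: real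
  assumes "0 \<le> z" "z \<le> 1"
  shows "sqrt (1 - (sqrt (1 - z^2))^2) = z"
  using assms by (simp add: power_le_one)

lemma collins_f1_has_real_derivative_at_zero:
  fixes z :: real
  defines "S \<equiv> sqrt (1 - z^2)"
  assumes z: "0 < z" "z < 1" and root: "poly (collins_cubic a b) S = 0"
  shows "(collins_f1 a b has_real_derivative
      - pi * (1 - S) * poly (pderiv (collins_cubic a b)) S / S) (at z)"
proof -
  let ?P = "collins_cubic a b"
  have "0 < S" "S < 1" using sqrt_one_minus_sq_mem_unit[of z] z by (simp_all add: S_def)
  have S': "((\<lambda>z. sqrt (1 - z^2)) has_real_derivative - z / S) (at z)"
    unfolding S_def using \<open>0 < S\<close>
    by (auto intro!: derivative_eq_intros simp: S_def field_simps)
  have P': "((\<lambda>z. poly ?P (sqrt (1 - z^2))) has_real_derivative poly (pderiv ?P) S * (- z / S)) (at z)"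
    using DERIV_chain2[OF poly_DERIV S'] by (simp add: S_def)
  have "((\<lambda>z. pi * (1 - sqrt (1 - z^2)) * poly ?P (sqrt (1 - z^2)) / z) has_real_derivative
      - pi * (1 - S) * poly (pderiv ?P) S / S) (at z)"
    using z \<open>0 < S\<close> root power_less_one_iff[of z 2]
    by (auto intro!: derivative_eq_intros S' P' simp flip: S_def simp: field_simps)
  then show ?thesis
  proof (rule has_field_derivative_transform_within_open)
    show "x \<in> {0<..<1} \<Longrightarrow> pi * (1 - sqrt (1 - x^2)) * poly ?P (sqrt (1 - x^2)) / x = collins_f1 a b x"
      for x
      using collins_f1_closed_form[of x a b] by (simp add: field_simps)
  qed (use z in auto)
qed

lemma mem_simple_zeros_collins_f1_iff:
  fixes z :: real
  defines "S \<equiv> sqrt (1 - z^2)"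
  assumes z: "0 < z" "z < 1"
  shows "z \<in> simple_zeros (collins_f1 a b) {0<..<1} \<longleftrightarrow>
    poly (collins_cubic a b) S = 0 \<and> poly (pderiv (collins_cubic a b)) S \<noteq> 0"
proof -
  have S: "0 < S" "S < 1" using sqrt_one_minus_sq_mem_unit[of z] z by (simp_all add: S_def)
  have zero_iff: "collins_f1 a b z = 0 \<longleftrightarrow> poly (collins_cubic a b) S = 0"
    using collins_f1_closed_form[OF z, of a b] z S by (auto simp flip: S_def)
  show ?thesis
  proof (cases "poly (collins_cubic a b) S = 0")
    case True
    note deriv = collins_f1_has_real_derivative_at_zero[OF z True[unfolded S_def], folded S_def]
    then have "collins_f1 a b differentiable (at z)"
      by (auto simp: real_differentiable_def)
    with deriv True S z show ?thesis
      by (simp add: simple_zeros_def zero_iff DERIV_imp_deriv)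
  next
    case False
    then show ?thesis by (simp add: simple_zeros_def zero_iff)
  qed
qed

lemma simple_zeros_collins_f1:
  "simple_zeros (collins_f1 a b) {0<..<1} = (\<lambda>s. sqrt (1 - s^2)) `
    {s \<in> {0<..<1}. poly (collins_cubic a b) s = 0 \<and> poly (pderiv (collins_cubic a b)) s \<noteq> 0}"
  (is "?Z = ?S ` ?A")
proof (intro set_eqI iffI)
  fix z assume "z \<in> ?Z"
  then have "z \<in> {0<..<1}" by (simp add: simple_zeros_def)
  with \<open>z \<in> ?Z\<close> have "?S z \<in> ?A"
    using mem_simple_zeros_collins_f1_iff sqrt_one_minus_sq_mem_unit by auto
  moreover have "z = ?S (?S z)"
    using \<open>z \<in> {0<..<1}\<close> by (simp add: sqrt_one_minus_sq_involution)
  ultimately show "z \<in> ?S ` ?A" by blast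
next
  fix z assume "z \<in> ?S ` ?A"
  then obtain s where s: "s \<in> ?A" and z: "z = ?S s" by blast
  then have "z \<in> {0<..<1}" and "?S z = s"
    using sqrt_one_minus_sq_mem_unit sqrt_one_minus_sq_involution by auto
  with s show "z \<in> ?Z"
    using mem_simple_zeros_collins_f1_iff by auto
qed

lemma simple_zeros_collins_f1_card_le_3:
  "finite (simple_zeros (collins_f1 a b) {0<..<1})
    \<and> card (simple_zeros (collins_f1 a b) {0<..<1}) \<le> 3"
proof -
  let ?P = "collins_cubic a b"
  let ?A = "{s \<in> {0<..<1}. poly ?P s = 0 \<and> poly (pderiv ?P) s \<noteq> 0}"
  have sub: "?A \<subseteq> {s. poly ?P s = 0 \<and> poly (pderiv ?P) s \<noteq> 0}" by auto
  have "finite ?A" by (rule finite_subset[OF sub finite_simple_roots])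
  have "card ((\<lambda>s. sqrt (1 - s^2)) ` ?A) \<le> card ?A"
    by (rule card_image_le[OF \<open>finite ?A\<close>])
  also have "\<dots> \<le> card {s. poly ?P s = 0 \<and> poly (pderiv ?P) s \<noteq> 0}"
    by (rule card_mono[OF finite_simple_roots sub])
  also have "\<dots> \<le> degree ?P" by (rule card_simple_roots_le_degree)
  also have "\<dots> \<le> 3"
    unfolding collins_cubic_def by (auto intro!: le_trans[OF degree_pCons_le])
  finally show ?thesis
    unfolding simple_zeros_collins_f1 using \<open>finite ?A\<close> by simp
qed

lemma simple_zeros_collins_f1_card_3:
  "\<exists>a b. finite (simple_zeros (collins_f1 a b) {0<..<1})
     \<and> card (simple_zeros (collins_f1 a b) {0<..<1}) = 3"
proof -
  define a :: "nat \<Rightarrow> nat \<Rightarrow> real" where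
    "a i j = (if (i, j) = (1, 0) then 19/2 else if (i, j) = (1, 2) then -25/2 else 0)" for i j
  define b :: "nat \<Rightarrow> nat \<Rightarrow> real" where
    "b i j = (if (i, j) = (0, 1) then -8 else if (i, j) = (2, 1) then -40 else 0)" for i j
  have P: "poly (collins_cubic a b) s = (4 * s - 1) * (2 * s - 1) * (4 * s - 3)" for s
    unfolding poly_collins_cubic a_def b_def by (simp add: algebra_simps power2_eq_square power3_eq_cube)
  have P': "poly (pderiv (collins_cubic a b)) s = 96 * s^2 - 96 * s + 22" for s
    unfolding collins_cubic_def a_def b_def by (simp add: pderiv_pCons algebra_simps power2_eq_square)
  have "{s \<in> {0<..<1}. poly (collins_cubic a b) s = 0 \<and> poly (pderiv (collins_cubic a b)) s \<noteq> 0}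
      = {1/4, 1/2, 3/4}"
    unfolding P P' by (auto simp: power2_eq_square)
  moreover have "inj_on (\<lambda>s::real. sqrt (1 - s^2)) {1/4, 1/2, 3/4}"
    by (rule inj_on_inverseI[where g = "\<lambda>s. sqrt (1 - s^2)"])
      (auto simp: sqrt_one_minus_sq_involution)
  ultimately have "card (simple_zeros (collins_f1 a b) {0<..<1}) = 3"
    unfolding simple_zeros_collins_f1 by (simp add: card_image)
  then show ?thesis by (intro exI[of _ a] exI[of _ b]) (simp add: card_ge_0_finite)
qed

lemma rsol_positive_domain:
  "{z. \<forall>\<theta>. 1 - z^2 * (sin \<theta>)^2 > 0 \<and> rsol \<theta> z > 0} = {0<..<1}"
proof (intro set_eqI iffI)
  fix z :: real
  assume "z \<in> {z. \<forall>\<theta>. 1 - z^2 * (sin \<theta>)^2 > 0 \<and> rsol \<theta> z > 0}"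
  then have "1 - z^2 * (sin (pi/2))^2 > 0 \<and> rsol (pi/2) z > 0" by blast
  then have "z^2 < 1" and "z > 0" by (auto simp: rsol_def zero_less_divide_iff)
  then show "z \<in> {0<..<1}" by (simp add: abs_square_less_1)
next
  fix z :: real
  assume "z \<in> {0<..<1}"
  then show "z \<in> {z. \<forall>\<theta>. 1 - z^2 * (sin \<theta>)^2 > 0 \<and> rsol \<theta> z > 0}"
    using one_minus_sq_mult_sq_pos[OF _ abs_sin_le_one] by (auto simp: rsol_def)
qed

theorem mainTheorem5:
  shows "(\<forall>\<theta> r. collinsF0 \<theta> r = r ^ 3 * cos \<theta> * sin \<theta>)
    \<and> (\<forall>z \<in> {0<..<1}. rsol 0 z = z
          \<and> (\<forall>\<theta>. ((\<lambda>t. rsol t z) has_real_derivative collinsF0 \<theta> (rsol \<theta> z)) (at \<theta>))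
          \<and> (\<forall>\<theta>. rsol (\<theta> + 2 * pi) z = rsol \<theta> z)
          \<and> (\<forall>\<theta>. rsol \<theta> z > 0))
    \<and> {z. \<forall>\<theta>. 1 - z ^ 2 * (sin \<theta>) ^ 2 > 0 \<and> rsol \<theta> z > 0} = {0<..<1}
    \<and> (\<forall>a b. \<forall>z \<in> {0<..<1}. let s = sqrt (1 - z ^ 2) in
          z * collins_f1 a b z = pi * (1 - s) *
            ((b 0 1 - b 0 3 - b 2 1) * s ^ 3
             + (b 0 1 - 2 * a 3 0 - b 0 3 + b 2 1) * s ^ 2
             + (a 1 0 - a 1 2 + a 3 0 + 2 * b 0 3) * s
             + a 1 0 + a 1 2 + a 3 0))
    \<and> (\<forall>a b. finite (simple_zeros (collins_f1 a b) {0<..<1})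
          \<and> card (simple_zeros (collins_f1 a b) {0<..<1}) \<le> 3)
    \<and> (\<exists>a b. finite (simple_zeros (collins_f1 a b) {0<..<1})
          \<and> card (simple_zeros (collins_f1 a b) {0<..<1}) = 3)"
proof (intro conjI)
  show "\<forall>z \<in> {0<..<1}. rsol 0 z = z
          \<and> (\<forall>\<theta>. ((\<lambda>t. rsol t z) has_real_derivative collinsF0 \<theta> (rsol \<theta> z)) (at \<theta>))
          \<and> (\<forall>\<theta>. rsol (\<theta> + 2 * pi) z = rsol \<theta> z)
          \<and> (\<forall>\<theta>. rsol \<theta> z > 0)"
    using rsol_has_real_derivative rsol_positive_domain by (auto simp: rsol_def)
  show "\<forall>a b. \<forall>z \<in> {0<..<1}. let s = sqrt (1 - z ^ 2) in
          z * collins_f1 a b z = pi * (1 - s) *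
            ((b 0 1 - b 0 3 - b 2 1) * s ^ 3
             + (b 0 1 - 2 * a 3 0 - b 0 3 + b 2 1) * s ^ 2
             + (a 1 0 - a 1 2 + a 3 0 + 2 * b 0 3) * s
             + a 1 0 + a 1 2 + a 3 0)"
    using collins_f1_closed_form by (simp add: poly_collins_cubic)
qed (use collinsF0_eq rsol_positive_domain simple_zeros_collins_f1_card_le_3
      simple_zeros_collins_f1_card_3 in auto)

end
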